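(* For every integer $d\geq 1$, $\alpha_{\mathbb{R}}^\ast(d) = \alpha_{\mathbb{R}}(d)$, i.e. \[ \max_{ \substack{D\in\mathbb{R}^{d\times d} \text{ diagonal},\ D \succeq 0,\ \|D\|_F^2 = d } }\mathbb{E}\left[ \frac1d\sum_{k=1}^d\sigma_k(GD)\right] = \mathbb{E}\left[ \frac1d\sum_{k=1}^d\sigma_k(G)\right], \] where $G\in\mathbb{R}^{d\times d}$ has i.i.d. real $\mathcal{N}\left(0,\frac1d\right)$ entries.
   Context: $\sigma_k(A)$ denotes the $k$-th singular value of $A$. $\alpha_{\mathbb{R}}(d)=\mathbb{E}\left[\frac1d\sum_{k=1}^d\sigma_k(G)\right]$ and $\alpha^\ast_{\mathbb{R}}(d)$ is the maximum on the left-hand side, over nonnegative diagonal $D$ with $\|D\|_F^2=d$. *)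

theory Defs
  imports "HOL-Analysis.Analysis" "HOL-Probability.Probability" "HOL-Library.Multiset"
begin

definition diag_mat :: "real^'n \<Rightarrow> real^'n^'n" where
  "diag_mat s = (\<chi> i j. if i = j then s $ i else 0)"

definition singular_values :: "real^'n^'n \<Rightarrow> real multiset" where
  "singular_values A = (THE M. \<exists>U V s. orthogonal_matrix U \<and> orthogonal_matrix V \<and>
      (\<forall>i. s $ i \<ge> 0) \<and> A = U ** diag_mat s ** transpose V \<and>
      M = image_mset (\<lambda>i. s $ i) (mset_set UNIV))"

text \<open>sigma A k: the k-th largest singular value (k = 1, ..., d).\<close>
definition sigma :: "real^'n^'n \<Rightarrow> nat \<Rightarrow> real" where
  "sigma A k = rev (sorted_list_of_multiset (singular_values A)) ! (k - 1)"

text \<open>Law of a d x d matrix G with i.i.d. N(0, 1/d) entries, d = CARD('n).\<close>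
definition gauss_mat :: "(real^'n^'n) measure" where
  "gauss_mat = density lborel (\<lambda>G. ennreal (\<Prod>i\<in>UNIV. \<Prod>j\<in>UNIV.
      normal_density 0 (1 / sqrt (real CARD('n))) (G $ i $ j)))"

definition alpha_R :: "'n::finite itself \<Rightarrow> real" where
  "alpha_R _ = (\<integral>G. (1 / real CARD('n)) * (\<Sum>k=1..CARD('n). sigma (G :: real^'n^'n) k) \<partial>gauss_mat)"

definition admissible_D :: "real^'n^'n \<Rightarrow> bool" where
  "admissible_D D \<longleftrightarrow> (\<forall>i j. i \<noteq> j \<longrightarrow> D $ i $ j = 0) \<and> (\<forall>i. D $ i $ i \<ge> 0) \<and>
      (\<Sum>i\<in>UNIV. \<Sum>j\<in>UNIV. (D $ i $ j)\<^sup>2) = real CARD('n)"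

definition alpha_R_star :: "'n::finite itself \<Rightarrow> real" where
  "alpha_R_star _ = (GREATEST v. \<exists>D :: real^'n^'n. admissible_D D \<and>
      v = (\<integral>G. (1 / real CARD('n)) * (\<Sum>k=1..CARD('n). sigma (G ** D) k) \<partial>gauss_mat))"

end

theory Submission
  imports Defs "HOL-Number_Theory.Cong"
begin

(* For an orthogonal W, trace (W M) is at most the sum ||M||_* of the singular values of M,
   with equality for a suitable W. Writing G = U S V^T and taking W optimal for G D with
   D = diag t, the AM-GM inequality applied to each term of trace (W G D) gives
     ||G D||_* <= (sum_i s_i + sum_j t_j^2 sum_i s_i V_ji^2) / 2.
   Summing over the cyclic shifts D_k of the diagonal of D (a Latin square on the column
   indices) replaces every t_j^2 by its mean ||D||_F^2 / d = 1, and the columns of V are unit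
   vectors, so sum_k ||G D_k||_* <= d ||G||_* pointwise. As G D_k = (G P_k) D P_k^T for a
   permutation matrix P_k and G P_k has the same Gaussian law as G, all D_k give the same
   expectation, whence E ||G D||_* <= E ||G||_*. The identity is admissible, so it attains
   the maximum. *)

section \<open>Spectral theorem for real symmetric matrices\<close>

definition orthonormal :: "(real^'n) set \<Rightarrow> bool" where
  "orthonormal S \<longleftrightarrow> pairwise orthogonal S \<and> (\<forall>x\<in>S. norm x = 1)"

lemma orthonormal_imp_finite: "orthonormal (B :: (real^'n) set) \<Longrightarrow> finite B"
  unfolding orthonormal_def using pairwise_orthogonal_imp_finite by blast

lemma orthogonal_matrix_of_orthonormal_columns:
  fixes f :: "'n \<Rightarrow> real^'n"
  assumes "orthonormal B" "inj f" "range f \<subseteq> B"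
  shows "orthogonal_matrix (\<chi> i j. f j $ i)"
proof -
  have col: "column j (\<chi> i j. f j $ i) = f j" for j
    by (simp add: column_def vec_eq_iff)
  show ?thesis
    unfolding orthogonal_matrix_orthonormal_columns col
    using assms unfolding orthonormal_def pairwise_def inj_def by blast
qed

lemma symmetric_matrix_inner_commute:
  fixes A :: "real^'n^'n"
  assumes "transpose A = A"
  shows "x \<bullet> (A *v y) = (A *v x) \<bullet> y"
  by (metis assms dot_lmul_matrix vector_transpose_matrix)

lemma linear_le_quadratic_imp_zero:
  fixes c K :: real
  assumes "\<And>t. 2 * t * c \<le> t\<^sup>2 * K"
  shows "c = 0"
proof (rule ccontr)
  assume "c \<noteq> 0"
  define m where "m = \<bar>K\<bar> + 1"
  have "m > 0" "c * c > 0"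
    using \<open>c \<noteq> 0\<close> by (auto simp: m_def zero_less_mult_iff linorder_neq_iff)
  have "2 * (c / m) * c \<le> (c / m)\<^sup>2 * K" by (rule assms)
  then have "(c * c) * (2 * m) \<le> (c * c) * K"
    using \<open>m > 0\<close> by (simp add: power2_eq_square field_simps)
  then have "2 * m \<le> K"
    using mult_le_cancel_left_pos[OF \<open>c * c > 0\<close>] by blast
  then show False by (simp add: m_def)
qed

text \<open>The Rayleigh quotient is stationary at a maximiser in every direction of the
  subspace, which forces A x to be parallel to x.\<close>

lemma rayleigh_maximiser_is_eigenvector:
  fixes A :: "real^'n^'n"
  assumes sym: "transpose A = A" and S: "subspace S"
    and invS: "\<And>y. y \<in> S \<Longrightarrow> A *v y \<in> S"
    and x: "x \<in> S" "norm x = 1"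
    and max: "\<And>y. y \<in> S \<Longrightarrow> norm y = 1 \<Longrightarrow> y \<bullet> (A *v y) \<le> x \<bullet> (A *v x)"
  shows "A *v x = (x \<bullet> (A *v x)) *\<^sub>R x"
proof -
  define f where "f y = y \<bullet> (A *v y)" for y
  have xx: "x \<bullet> x = 1" using x(2) by (simp add: norm_eq_1)
  have stationary: "y \<bullet> (A *v x) = 0" if yS: "y \<in> S" and xy: "x \<bullet> y = 0" for y
  proof (rule linear_le_quadratic_imp_zero)
    fix t :: real
    define z where "z = x + t *\<^sub>R y"
    have zS: "z \<in> S" unfolding z_def using S x yS by (simp add: subspace_add subspace_scale)
    have zz: "z \<bullet> z = 1 + t\<^sup>2 * (y \<bullet> y)" unfolding z_def
      using xx xy by (simp add: inner_add_left inner_add_right inner_commute power2_eq_square)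
    moreover have "t\<^sup>2 * (y \<bullet> y) \<ge> 0" by simp
    ultimately have "z \<bullet> z > 0" by linarith
    then have "f ((1 / norm z) *\<^sub>R z) \<le> f x"
      unfolding f_def using zS S by (intro max) (auto simp: subspace_scale)
    moreover have "f ((1 / norm z) *\<^sub>R z) = f z / (z \<bullet> z)"
      unfolding f_def by (simp add: matrix_vector_mult_scaleR dot_square_norm power2_eq_square)
    ultimately have "f z \<le> f x * (z \<bullet> z)" using \<open>z \<bullet> z > 0\<close> by (simp add: divide_le_eq)
    moreover have "f z = f x + 2 * t * (y \<bullet> (A *v x)) + t\<^sup>2 * f y"
      using symmetric_matrix_inner_commute[OF sym, of x y]
      unfolding f_def z_def
      by (simp add: inner_commute power2_eq_square algebra_simps)
    ultimately show "2 * t * (y \<bullet> (A *v x)) \<le> t\<^sup>2 * (f x * (y \<bullet> y) - f y)"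
      using zz by (simp add: algebra_simps)
  qed
  define r where "r = A *v x - f x *\<^sub>R x"
  have "r \<in> S" unfolding r_def using S invS x by (simp add: subspace_diff subspace_scale)
  moreover have "x \<bullet> r = 0" unfolding r_def f_def using xx by (simp add: inner_diff_right)
  ultimately have "r \<bullet> (A *v x) = 0" by (rule stationary)
  moreover have "r \<bullet> r = r \<bullet> (A *v x) - f x * (r \<bullet> x)"
    unfolding r_def by (simp add: inner_diff_right)
  ultimately have "r = 0" using \<open>x \<bullet> r = 0\<close> by (simp add: inner_commute)
  then show ?thesis unfolding r_def f_def by simp
qed

lemma symmetric_matrix_eigenvector_orthogonal:
  fixes A :: "real^'n^'n" and B :: "(real^'n) set"
  assumes sym: "transpose A = A"
    and eigB: "\<And>v. v \<in> B \<Longrightarrow> \<exists>c. A *v v = c *\<^sub>R v"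
    and sp: "span B \<noteq> UNIV"
  obtains x c where "norm x = 1" "\<And>v. v \<in> B \<Longrightarrow> orthogonal v x" "A *v x = c *\<^sub>R x"
proof -
  define S where "S = {y. \<forall>v\<in>B. orthogonal v y}"
  have S: "subspace S" unfolding S_def by (rule subspace_orthogonal_to_vectors)
  have invS: "A *v y \<in> S" if "y \<in> S" for y
  proof -
    have "v \<bullet> (A *v y) = 0" if "v \<in> B" for v
    proof -
      obtain c where "A *v v = c *\<^sub>R v" using eigB \<open>v \<in> B\<close> by blast
      then have "v \<bullet> (A *v y) = c * (v \<bullet> y)"
        by (simp add: symmetric_matrix_inner_commute[OF sym])
      then show ?thesis using \<open>y \<in> S\<close> \<open>v \<in> B\<close> unfolding S_def orthogonal_def by simp
    qed
    then show ?thesis unfolding S_def orthogonal_def by blast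
  qed
  obtain a where "a \<noteq> 0" "\<forall>x\<in>span B. a \<bullet> x = 0"
    using span_not_UNIV_orthogonal[OF sp] by blast
  then have "a \<in> S" unfolding S_def orthogonal_def
    using span_base by (fastforce simp: inner_commute)
  define K where "K = S \<inter> sphere 0 1"
  have "(1 / norm a) *\<^sub>R a \<in> K" unfolding K_def using \<open>a \<noteq> 0\<close> \<open>a \<in> S\<close> S
    by (auto simp: subspace_scale)
  moreover have "compact K" unfolding K_def
    by (intro closed_Int_compact closed_subspace S compact_sphere)
  moreover have "continuous_on K (\<lambda>y. y \<bullet> (A *v y))"
    by (intro continuous_intros linear_continuous_on matrix_vector_mul_linear)
  ultimately obtain x where x: "x \<in> K" "\<forall>y\<in>K. y \<bullet> (A *v y) \<le> x \<bullet> (A *v x)"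
    using continuous_attains_sup[of K] by blast
  then have "x \<in> S" "norm x = 1" unfolding K_def by auto
  then have "A *v x = (x \<bullet> (A *v x)) *\<^sub>R x"
    using x(2) by (intro rayleigh_maximiser_is_eigenvector[OF sym S invS]) (auto simp: K_def)
  then show ?thesis using that \<open>x \<in> S\<close> \<open>norm x = 1\<close> unfolding S_def by blast
qed

lemma orthonormal_eigenvectors_extend:
  fixes A :: "real^'n^'n" and B :: "(real^'n) set"
  assumes sym: "transpose A = A"
  shows "orthonormal B \<Longrightarrow> (\<forall>v\<in>B. \<exists>c. A *v v = c *\<^sub>R v) \<Longrightarrow>
    card B \<le> k \<Longrightarrow> k \<le> CARD('n) \<Longrightarrow>
    \<exists>B'. B \<subseteq> B' \<and> orthonormal B' \<and> (\<forall>v\<in>B'. \<exists>c. A *v v = c *\<^sub>R v) \<and> card B' = k"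
proof (induction k)
  case 0
  then show ?case by auto
next
  case (Suc k)
  show ?case
  proof (cases "card B = Suc k")
    case False
    then have "card B \<le> k" using Suc.prems by simp
    then obtain B1 where B1: "B \<subseteq> B1" "orthonormal B1" "\<forall>v\<in>B1. \<exists>c. A *v v = c *\<^sub>R v"
      "card B1 = k"
      using Suc by auto
    have "finite B1" using B1(2) by (rule orthonormal_imp_finite)
    have "span B1 \<noteq> UNIV"
    proof
      assume "span B1 = UNIV"
      then have "dim (UNIV :: (real^'n) set) = dim B1" by (metis dim_span)
      also have "\<dots> \<le> k" using dim_le_card'[OF \<open>finite B1\<close>] B1(4) by simp
      finally have "CARD('n) \<le> k" by simp
      then show False using Suc.prems(4) by simp
    qed
    then obtain x where x: "norm x = 1" "\<forall>v\<in>B1. orthogonal v x" "\<exists>c. A *v x = c *\<^sub>R x"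
      using symmetric_matrix_eigenvector_orthogonal[OF sym, of B1] B1(3) by metis
    have "x \<notin> B1"
    proof
      assume "x \<in> B1"
      then have "orthogonal x x" using x(2) by blast
      then show False using x(1) by (simp add: orthogonal_self)
    qed
    have "orthonormal (insert x B1)"
      using B1(2) x(1,2) unfolding orthonormal_def
      by (auto intro!: pairwise_orthogonal_insert simp: orthogonal_commute)
    moreover have "card (insert x B1) = Suc k"
      using \<open>finite B1\<close> \<open>x \<notin> B1\<close> B1(4) by simp
    ultimately show ?thesis using B1 x by (intro exI[of _ "insert x B1"]) auto
  qed (use Suc.prems in blast)
qed

lemma orthonormal_extend:
  fixes B :: "(real^'n) set"
  assumes "orthonormal B"
  obtains B' where "B \<subseteq> B'" "orthonormal B'" "card B' = CARD('n)"
proof -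
  have "independent B"
    using assms pairwise_orthogonal_independent unfolding orthonormal_def by fastforce
  then have "card B \<le> dim (UNIV :: (real^'n) set)"
    by (metis independent_card_le_dim top_greatest)
  then have "card B \<le> CARD('n)" by simp
  moreover have "\<forall>v\<in>B. \<exists>c. (mat 0 :: real^'n^'n) *v v = c *\<^sub>R v"
    \<comment> \<open>every vector is an eigenvector of the zero matrix\<close>
    by (auto intro: exI[of _ 0])
  ultimately show ?thesis
    using orthonormal_eigenvectors_extend[OF transpose_mat assms] that by blast
qed

theorem symmetric_matrix_orthogonal_eigenbasis:
  fixes A :: "real^'n^'n"
  assumes sym: "transpose A = A"
  obtains V :: "real^'n^'n" and lam
  where "orthogonal_matrix V" "\<And>c. A *v column c V = (lam $ c) *\<^sub>R column c V"
proof -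
  obtain B where B: "orthonormal B" "\<forall>v\<in>B. \<exists>c. A *v v = c *\<^sub>R v" "card B = CARD('n)"
    using orthonormal_eigenvectors_extend[OF sym, of "{}" "CARD('n)"] by (auto simp: orthonormal_def)
  have "\<exists>f :: 'n \<Rightarrow> real^'n. bij_betw f UNIV B"
    by (rule finite_same_card_bij) (simp_all add: orthonormal_imp_finite[OF B(1)] B(3))
  then obtain f :: "'n \<Rightarrow> real^'n" where f: "bij_betw f UNIV B" ..
  define V :: "real^'n^'n" where "V = (\<chi> i j. f j $ i)"
  define lam where "lam = (\<chi> c. SOME mu. A *v f c = mu *\<^sub>R f c)"
  have "orthogonal_matrix V"
    unfolding V_def using f B(1) orthogonal_matrix_of_orthonormal_columns
    by (metis bij_betw_imp_inj_on bij_betw_imp_surj_on order_refl)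
  moreover have "A *v column c V = (lam $ c) *\<^sub>R column c V" for c
  proof -
    have "f c \<in> B" using f bij_betwE by blast
    then have "\<exists>mu. A *v f c = mu *\<^sub>R f c" using B(2) by blast
    then have "A *v f c = (SOME mu. A *v f c = mu *\<^sub>R f c) *\<^sub>R f c" by (rule someI_ex)
    moreover have "column c V = f c" by (simp add: V_def column_def vec_eq_iff)
    ultimately show ?thesis by (simp add: lam_def)
  qed
  ultimately show ?thesis by (rule that)
qed

section \<open>Singular value decomposition\<close>

definition is_svd :: "real^'n^'n \<Rightarrow> real^'n^'n \<Rightarrow> real^'n \<Rightarrow> real^'n^'n \<Rightarrow> bool" where
  "is_svd A U s V \<longleftrightarrow> orthogonal_matrix U \<and> orthogonal_matrix V \<and> (\<forall>i. 0 \<le> s $ i) \<and>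
     A = U ** diag_mat s ** transpose V"

lemma matrix_mult_diag_mat_nth: "(X ** diag_mat s) $ i $ j = X $ i $ j * s $ j"
proof -
  have "(\<Sum>k\<in>UNIV. X $ i $ k * (if k = j then s $ k else 0)) = X $ i $ j * s $ j"
    by (simp add: if_distrib cong: if_cong)
  then show ?thesis by (simp add: matrix_matrix_mult_def diag_mat_def)
qed

lemma matrix_mult_diag_mat_mult_transpose_nth:
  "(X ** diag_mat r ** transpose Y) $ i $ j = (\<Sum>k\<in>UNIV. X $ i $ k * r $ k * Y $ j $ k)"
  by (simp add: matrix_matrix_mult_def transpose_def matrix_mult_diag_mat_nth[symmetric])

lemma transpose_diag_mat [simp]: "transpose (diag_mat s) = diag_mat s"
  by (simp add: transpose_def diag_mat_def vec_eq_iff)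

lemma diag_mat_mult: "diag_mat s ** diag_mat t = diag_mat (\<chi> i. s $ i * t $ i)"
  by (simp add: vec_eq_iff matrix_mult_diag_mat_nth) (simp add: diag_mat_def)

lemma column_matrix_mult: "column c (A ** B) = A *v column c (B :: real^'n^'m)"
  by (simp add: column_def vec_eq_iff matrix_matrix_mult_def matrix_vector_mult_def)

lemma column_mult_diag_mat: "column c (X ** diag_mat s) = (s $ c) *\<^sub>R column c (X :: real^'n^'m)"
  by (simp add: column_def vec_eq_iff matrix_mult_diag_mat_nth)

lemma matrix_eq_columnsI: "(\<And>c. column c X = column c Y) \<Longrightarrow> X = (Y :: real^'n^'m)"
  by (simp add: column_def vec_eq_iff)

lemma inner_transpose_matrix_vector: "x \<bullet> (transpose A *v z) = (A *v x) \<bullet> (z :: real^'m)"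
  by (metis dot_lmul_matrix vector_transpose_matrix)

lemma orthogonal_matrix_column_inner:
  fixes V :: "real^'n^'n"
  assumes "orthogonal_matrix V"
  shows "column c V \<bullet> column d V = (if c = d then 1 else 0)"
  using assms unfolding orthogonal_matrix_orthonormal_columns
  by (auto simp: orthogonal_def norm_eq_1)

lemma orthonormal_family_extends_to_orthogonal_matrix:
  fixes u :: "'n \<Rightarrow> real^'n"
  assumes u: "\<And>c d. c \<in> P \<Longrightarrow> d \<in> P \<Longrightarrow> u c \<bullet> u d = (if c = d then 1 else 0)"
  obtains U :: "real^'n^'n" where "orthogonal_matrix U" "\<And>c. c \<in> P \<Longrightarrow> column c U = u c"
proof -
  have "inj_on u P"
    by (rule inj_onI) (metis u zero_neq_one)
  have "orthonormal (u ` P)"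
    unfolding orthonormal_def pairwise_def orthogonal_def using u by (auto simp: norm_eq_1)
  then obtain B where B: "u ` P \<subseteq> B" "orthonormal B" "card B = CARD('n)"
    by (rule orthonormal_extend)
  have "finite B" using B(2) by (rule orthonormal_imp_finite)
  have "card (UNIV - P) = CARD('n) - card P"
    by (simp add: card_Diff_subset)
  also have "\<dots> = card (B - u ` P)"
    using B \<open>finite B\<close> \<open>inj_on u P\<close> by (simp add: card_Diff_subset finite_subset card_image)
  finally have "\<exists>g. bij_betw g (UNIV - P) (B - u ` P)"
    by (intro finite_same_card_bij) (simp_all add: \<open>finite B\<close>)
  then obtain g where g: "bij_betw g (UNIV - P) (B - u ` P)" ..
  define f where "f c = (if c \<in> P then u c else g c)" for c
  have "bij_betw f P (u ` P)"
    using \<open>inj_on u P\<close> by (simp add: f_def bij_betw_imageI cong: bij_betw_cong)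
  moreover have "bij_betw f (UNIV - P) (B - u ` P)"
    using g by (rule bij_betw_cong[THEN iffD1, rotated]) (simp add: f_def)
  ultimately have "bij_betw f (P \<union> (UNIV - P)) (u ` P \<union> (B - u ` P))"
    by (rule bij_betw_combine) blast
  then have f: "bij_betw f UNIV (u ` P \<union> (B - u ` P))" by simp
  have "inj f" using f by (rule bij_betw_imp_inj_on)
  moreover have "range f \<subseteq> B" using bij_betw_imp_surj_on[OF f] B(1) by blast
  ultimately have "orthogonal_matrix (\<chi> i j. f j $ i)"
    by (rule orthogonal_matrix_of_orthonormal_columns[OF B(2)])
  moreover have "column c (\<chi> i j. f j $ i) = u c" if "c \<in> P" for c
    using that by (simp add: column_def vec_eq_iff f_def)
  ultimately show ?thesis by (rule that)
qed

text \<open>The columns of V diagonalise the Gram matrix of A; on the columns with nonzero eigenvalue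
  A acts as scaling onto an orthonormal family, which is completed to U.\<close>

theorem singular_value_decomposition:
  fixes A :: "real^'n^'n"
  obtains U s V where "is_svd A U s V"
proof -
  define M where "M = transpose A ** A"
  have "transpose M = M" unfolding M_def by (simp add: matrix_transpose_mul)
  then obtain V :: "real^'n^'n" and lam where V: "orthogonal_matrix V" "\<And>c. M *v column c V = (lam $ c) *\<^sub>R column c V"
    using symmetric_matrix_orthogonal_eigenbasis by blast
  define v where "v c = column c V" for c
  have Av_inner: "(A *v v c) \<bullet> (A *v v d) = (if c = d then lam $ d else 0)" for c d
  proof -
    have "M *v v d = transpose A *v (A *v v d)" by (simp only: M_def matrix_vector_mul_assoc)
    then have "(A *v v c) \<bullet> (A *v v d) = v c \<bullet> (M *v v d)"
      by (simp only: inner_transpose_matrix_vector)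
    then show ?thesis
      using orthogonal_matrix_column_inner[OF V(1), of c d] by (simp add: V(2) v_def)
  qed
  have lam_nonneg: "lam $ c \<ge> 0" for c using Av_inner[of c c] by (metis inner_ge_zero)
  define s where "s = (\<chi> c. sqrt (lam $ c))"
  define P where "P = {c. lam $ c > 0}"
  define u where "u c = (1 / s $ c) *\<^sub>R (A *v v c)" for c
  have "u c \<bullet> u d = (if c = d then 1 else 0)" if "c \<in> P" "d \<in> P" for c d
  proof -
    have "s $ c * s $ c = lam $ c" unfolding s_def using lam_nonneg[of c] by simp
    then show ?thesis using that Av_inner[of c d] unfolding u_def P_def by auto
  qed
  then obtain U where U: "orthogonal_matrix U" "\<And>c. c \<in> P \<Longrightarrow> column c U = u c"
    using orthonormal_family_extends_to_orthogonal_matrix by blast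
  have "A *v v c = (s $ c) *\<^sub>R column c U" for c
  proof (cases "c \<in> P")
    case True
    then have "s $ c > 0" unfolding s_def P_def by simp
    then show ?thesis using True by (simp add: U(2) u_def)
  next
    case False
    then have "lam $ c = 0" using lam_nonneg[of c] unfolding P_def by simp
    then have "A *v v c = 0" using Av_inner[of c c] by simp
    then show ?thesis using \<open>lam $ c = 0\<close> unfolding s_def by simp
  qed
  then have "A ** V = U ** diag_mat s"
    by (intro matrix_eq_columnsI) (simp add: column_mult_diag_mat column_matrix_mult[where A = A] v_def)
  moreover have "A = A ** (V ** transpose V)" using V(1) unfolding orthogonal_matrix_def by simp
  ultimately have "A = U ** diag_mat s ** transpose V" by (simp add: matrix_mul_assoc)
  moreover have "\<forall>i. 0 \<le> s $ i" unfolding s_def using lam_nonneg by simp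
  ultimately show ?thesis using that U(1) V(1) unfolding is_svd_def by blast
qed

lemma is_svd_gram:
  assumes "is_svd A U s V"
  shows "transpose A ** A = V ** diag_mat (\<chi> i. s $ i * s $ i) ** transpose V"
proof -
  have A: "A = U ** diag_mat s ** transpose V" and "transpose U ** U = mat 1"
    using assms unfolding is_svd_def orthogonal_matrix_def by simp_all
  then have "transpose A = V ** diag_mat s ** transpose U"
    by (simp add: matrix_transpose_mul matrix_mul_assoc)
  then have "transpose A ** A = V ** diag_mat s ** (transpose U ** U) ** diag_mat s ** transpose V"
    using A by (simp add: matrix_mul_assoc)
  then show ?thesis
    using \<open>transpose U ** U = mat 1\<close> by (simp add: matrix_mul_assoc[symmetric] diag_mat_mult)
qed

lemma det_mat_minus_orthogonal_conj_diag:
  fixes V :: "real^'n^'n"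
  assumes V: "orthogonal_matrix V"
  shows "det (mat x - V ** diag_mat t ** transpose V) = (\<Prod>i\<in>UNIV. x - t $ i)"
proof -
  define t' where "t' = (\<chi> i. x - t $ i)"
  have VVt: "(\<Sum>k\<in>UNIV. V $ i $ k * V $ j $ k) = (if i = j then 1 else 0)" for i j
    using V unfolding orthogonal_matrix_def
    by (simp add: vec_eq_iff matrix_matrix_mult_def transpose_def mat_def)
  have "mat x - V ** diag_mat t ** transpose V = V ** diag_mat t' ** transpose V"
  proof -
    have "(\<Sum>k\<in>UNIV. V $ i $ k * t' $ k * V $ j $ k)
        = x * (\<Sum>k\<in>UNIV. V $ i $ k * V $ j $ k) - (\<Sum>k\<in>UNIV. V $ i $ k * t $ k * V $ j $ k)" for i j
      by (simp add: t'_def sum_distrib_left sum_subtractf[symmetric] algebra_simps)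
    then show ?thesis by (simp add: vec_eq_iff matrix_mult_diag_mat_mult_transpose_nth VVt mat_def)
  qed
  moreover have "det V * det (transpose V) = 1"
    using V unfolding orthogonal_matrix_def by (metis det_mul det_I)
  moreover have "det (diag_mat t') = (\<Prod>i\<in>UNIV. t' $ i)"
    by (subst det_diagonal) (simp_all add: diag_mat_def)
  ultimately show ?thesis by (simp add: det_mul t'_def)
qed

lemma proots_prod_linear_factors: "proots (\<Prod>i\<in>A. [:- f i, 1:]) = image_mset f (mset_set A)"
proof -
  have "proots (\<Prod>i\<in>A. [:- f i, 1:]) = (\<Sum>i\<in>A. {#f i#})"
    by (simp add: proots_prod)
  also have "\<dots> = image_mset f (mset_set A)"
    by (induction A rule: infinite_finite_induct) auto
  finally show ?thesis .
qed

text \<open>Both decompositions diagonalise the Gram matrix, whose characteristic polynomial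
  therefore has the squared singular values of either as its roots.\<close>

lemma is_svd_singular_values_unique:
  assumes svd: "is_svd A U s V" "is_svd A U' s' V'"
  shows "image_mset (($) s) (mset_set UNIV) = image_mset (($) s') (mset_set UNIV)"
proof -
  let ?q = "\<chi> i. s $ i * s $ i" and ?q' = "\<chi> i. s' $ i * s' $ i"
  have V: "orthogonal_matrix V" "orthogonal_matrix V'"
    and nonneg: "\<forall>i. 0 \<le> s $ i" "\<forall>i. 0 \<le> s' $ i"
    using svd by (simp_all add: is_svd_def)
  have "(\<Prod>i\<in>UNIV. x - ?q $ i) = (\<Prod>i\<in>UNIV. x - ?q' $ i)" for x
    using det_mat_minus_orthogonal_conj_diag[OF V(1), of x ?q]
      det_mat_minus_orthogonal_conj_diag[OF V(2), of x ?q']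
    by (simp add: is_svd_gram[OF svd(1), symmetric] is_svd_gram[OF svd(2), symmetric])
  then have "poly (\<Prod>i\<in>UNIV. [:- (?q $ i), 1:]) = poly (\<Prod>i\<in>UNIV. [:- (?q' $ i), 1:])"
    by (simp add: poly_prod fun_eq_iff)
  then have "proots (\<Prod>i\<in>UNIV. [:- (?q $ i), 1:]) = proots (\<Prod>i\<in>UNIV. [:- (?q' $ i), 1:])"
    by (simp only: poly_eq_poly_eq_iff)
  then have "image_mset sqrt (image_mset (($) ?q) (mset_set UNIV))
      = image_mset sqrt (image_mset (($) ?q') (mset_set UNIV))"
    by (simp only: proots_prod_linear_factors)
  moreover have "image_mset sqrt (image_mset (($) ?q) (mset_set UNIV)) = image_mset (($) s) (mset_set UNIV)"
    "image_mset sqrt (image_mset (($) ?q') (mset_set UNIV)) = image_mset (($) s') (mset_set UNIV)"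
    using nonneg by (simp_all add: image_mset.compositionality comp_def cong: image_mset_cong)
  ultimately show ?thesis by simp
qed

lemma singular_values_is_svd:
  assumes "is_svd A U s V"
  shows "singular_values A = image_mset (($) s) (mset_set UNIV)"
  unfolding singular_values_def
proof (rule the_equality)
  show "\<exists>U V s'. orthogonal_matrix U \<and> orthogonal_matrix V \<and> (\<forall>i. 0 \<le> s' $ i) \<and>
      A = U ** diag_mat s' ** transpose V \<and>
      image_mset (($) s) (mset_set UNIV) = image_mset (($) s') (mset_set UNIV)"
    using assms unfolding is_svd_def by blast
next
  fix M
  assume "\<exists>U V s'. orthogonal_matrix U \<and> orthogonal_matrix V \<and> (\<forall>i. 0 \<le> s' $ i) \<and>
      A = U ** diag_mat s' ** transpose V \<and> M = image_mset (($) s') (mset_set UNIV)"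
  then show "M = image_mset (($) s) (mset_set UNIV)"
    using is_svd_singular_values_unique[OF assms] unfolding is_svd_def by metis
qed

section \<open>The nuclear norm\<close>

definition nuclear_norm :: "real^'n^'n \<Rightarrow> real" where
  "nuclear_norm A = (\<Sum>k=1..CARD('n). sigma A k)"

lemma nuclear_norm_is_svd:
  fixes A :: "real^'n^'n"
  assumes "is_svd A U s V"
  shows "nuclear_norm A = (\<Sum>i\<in>UNIV. s $ i)"
proof -
  define L where "L = sorted_list_of_multiset (singular_values A)"
  have L: "mset L = image_mset (($) s) (mset_set UNIV)"
    unfolding L_def by (simp add: singular_values_is_svd[OF assms])
  have "length L = size (mset L)" by simp
  then have "length L = CARD('n)" by (simp add: L)
  have "nuclear_norm A = (\<Sum>k<CARD('n). rev L ! k)"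
    by (simp add: nuclear_norm_def sigma_def L_def sum.atLeast1_atMost_eq)
  also have "\<dots> = sum_list (rev L)"
    by (simp add: sum_list_sum_nth \<open>length L = CARD('n)\<close> atLeast0LessThan)
  also have "\<dots> = (\<Sum>i\<in>UNIV. s $ i)"
    by (simp add: sum_mset_sum_list[symmetric] L sum_unfold_sum_mset)
  finally show ?thesis .
qed

lemma orthogonal_matrix_nth_abs_le:
  fixes Q :: "real^'n^'n"
  assumes "orthogonal_matrix Q"
  shows "\<bar>Q $ i $ j\<bar> \<le> 1"
proof -
  have "\<bar>column j Q $ i\<bar> \<le> norm (column j Q)" by (rule component_le_norm_cart)
  also have "\<dots> = 1" using assms unfolding orthogonal_matrix_orthonormal_columns by simp
  finally show ?thesis by (simp add: column_def)
qed

lemma orthogonal_matrix_column_sum_squares: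
  fixes Q :: "real^'n^'n"
  assumes "orthogonal_matrix Q"
  shows "(\<Sum>i\<in>UNIV. (Q $ i $ j)\<^sup>2) = 1"
proof -
  have "(transpose Q ** Q) $ j $ j = 1" using assms unfolding orthogonal_matrix_def by (simp add: mat_def)
  then show ?thesis by (simp add: matrix_matrix_mult_def transpose_def power2_eq_square)
qed

lemma trace_mult_diag_mat: "trace (Q ** diag_mat s) = (\<Sum>i\<in>UNIV. Q $ i $ i * s $ i)"
  by (simp add: trace_def matrix_mult_diag_mat_nth)

lemma trace_orthogonal_mult_le_nuclear_norm:
  fixes A W :: "real^'n^'n"
  assumes W: "orthogonal_matrix W"
  shows "trace (W ** A) \<le> nuclear_norm A"
proof -
  obtain U s V where svd: "is_svd A U s V" by (rule singular_value_decomposition)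
  then have U: "orthogonal_matrix U" and V: "orthogonal_matrix V" and s: "\<forall>i. 0 \<le> s $ i"
    and A: "A = U ** diag_mat s ** transpose V"
    by (simp_all add: is_svd_def)
  define Q where "Q = transpose V ** W ** U"
  have Q: "orthogonal_matrix Q" unfolding Q_def using U V W by (simp add: orthogonal_matrix_mul)
  have "trace (W ** A) = trace ((W ** U ** diag_mat s) ** transpose V)"
    by (simp add: A matrix_mul_assoc)
  also have "\<dots> = trace (Q ** diag_mat s)"
    by (simp add: trace_mul_sym[of _ "transpose V"] Q_def matrix_mul_assoc)
  also have "\<dots> = (\<Sum>i\<in>UNIV. Q $ i $ i * s $ i)" by (rule trace_mult_diag_mat)
  also have "\<dots> \<le> (\<Sum>i\<in>UNIV. s $ i)"
  proof (rule sum_mono)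
    fix i
    have "Q $ i $ i \<le> 1" using orthogonal_matrix_nth_abs_le[OF Q, of i i] by simp
    then show "Q $ i $ i * s $ i \<le> s $ i" using mult_right_mono[of _ 1 "s $ i"] s by simp
  qed
  finally show ?thesis by (simp add: nuclear_norm_is_svd[OF svd])
qed

lemma nuclear_norm_attained:
  fixes A :: "real^'n^'n"
  obtains W where "orthogonal_matrix W" "nuclear_norm A = trace (W ** A)"
proof -
  obtain U s V where svd: "is_svd A U s V" by (rule singular_value_decomposition)
  then have U: "orthogonal_matrix U" and V: "orthogonal_matrix V"
    and A: "A = U ** diag_mat s ** transpose V"
    by (simp_all add: is_svd_def)
  have "(V ** transpose U) ** A = V ** (transpose U ** U) ** diag_mat s ** transpose V"
    by (simp add: A matrix_mul_assoc)
  also have "transpose U ** U = mat 1" using U unfolding orthogonal_matrix_def by simp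
  finally have "trace ((V ** transpose U) ** A) = trace (transpose V ** (V ** diag_mat s))"
    by (simp add: trace_mul_sym[of _ "transpose V"] matrix_mul_assoc)
  also have "\<dots> = trace (diag_mat s)"
    using V unfolding orthogonal_matrix by (simp add: matrix_mul_assoc)
  also have "\<dots> = nuclear_norm A"
    by (simp add: nuclear_norm_is_svd[OF svd] trace_def diag_mat_def)
  finally show ?thesis
    using that[of "V ** transpose U"] U V by (simp add: orthogonal_matrix_mul)
qed

lemma nuclear_norm_nonneg: "0 \<le> nuclear_norm (A :: real^'n^'n)"
proof -
  obtain U s V where svd: "is_svd A U s V" by (rule singular_value_decomposition)
  then have "\<forall>i. 0 \<le> s $ i" by (simp add: is_svd_def)
  then show ?thesis by (simp add: nuclear_norm_is_svd[OF svd] sum_nonneg)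
qed

lemma nuclear_norm_triangle: "nuclear_norm (A + B) \<le> nuclear_norm A + nuclear_norm (B :: real^'n^'n)"
proof -
  obtain W where W: "orthogonal_matrix W" "nuclear_norm (A + B) = trace (W ** (A + B))"
    by (rule nuclear_norm_attained)
  then show ?thesis
    using trace_orthogonal_mult_le_nuclear_norm[OF W(1)]
    by (simp add: matrix_add_ldistrib trace_add add_mono)
qed

lemma nuclear_norm_mult_orthogonal_le:
  fixes A Q :: "real^'n^'n"
  assumes Q: "orthogonal_matrix Q"
  shows "nuclear_norm (A ** Q) \<le> nuclear_norm A"
proof -
  obtain W where W: "orthogonal_matrix W" "nuclear_norm (A ** Q) = trace (W ** (A ** Q))"
    by (rule nuclear_norm_attained)
  have "trace (W ** (A ** Q)) = trace ((Q ** W) ** A)"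
    by (simp add: trace_mul_sym[of "W ** A" Q] matrix_mul_assoc)
  also have "\<dots> \<le> nuclear_norm A"
    using Q W(1) by (intro trace_orthogonal_mult_le_nuclear_norm orthogonal_matrix_mul)
  finally show ?thesis using W(2) by simp
qed

lemma nuclear_norm_mult_orthogonal:
  fixes A Q :: "real^'n^'n"
  assumes Q: "orthogonal_matrix Q"
  shows "nuclear_norm (A ** Q) = nuclear_norm A"
proof (rule antisym)
  have "A = A ** Q ** transpose Q" using Q unfolding orthogonal_matrix_def
    by (simp add: matrix_mul_assoc[symmetric])
  then show "nuclear_norm A \<le> nuclear_norm (A ** Q)"
    using nuclear_norm_mult_orthogonal_le[of "transpose Q" "A ** Q"] Q by simp
qed (rule nuclear_norm_mult_orthogonal_le[OF Q])

lemma nuclear_norm_le_sum_abs: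
  "nuclear_norm (A :: real^'n^'n) \<le> (\<Sum>i\<in>UNIV. \<Sum>k\<in>UNIV. \<bar>A $ k $ i\<bar>)"
proof -
  obtain W where W: "orthogonal_matrix W" "nuclear_norm A = trace (W ** A)"
    by (rule nuclear_norm_attained)
  have "trace (W ** A) = (\<Sum>i\<in>UNIV. \<Sum>k\<in>UNIV. W $ i $ k * A $ k $ i)"
    by (simp add: trace_def matrix_matrix_mult_def)
  also have "\<dots> \<le> (\<Sum>i\<in>UNIV. \<Sum>k\<in>UNIV. \<bar>A $ k $ i\<bar>)"
  proof (intro sum_mono)
    fix i k
    have "W $ i $ k * A $ k $ i \<le> \<bar>W $ i $ k\<bar> * \<bar>A $ k $ i\<bar>" by (simp add: abs_mult[symmetric])
    also have "\<dots> \<le> \<bar>A $ k $ i\<bar>"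
      using orthogonal_matrix_nth_abs_le[OF W(1)] mult_right_mono[of _ 1 "\<bar>A $ k $ i\<bar>"] by simp
    finally show "W $ i $ k * A $ k $ i \<le> \<bar>A $ k $ i\<bar>" .
  qed
  finally show ?thesis using W(2) by simp
qed

lemma abs_matrix_nth_le_norm: "\<bar>M $ k $ i\<bar> \<le> norm (M :: real^'n^'m)"
  using component_le_norm_cart[of "M $ k" i] Finite_Cartesian_Product.norm_nth_le[of M k] by linarith

lemma continuous_on_nuclear_norm: "continuous_on UNIV (nuclear_norm :: real^'n^'n \<Rightarrow> real)"
proof (rule lipschitz_on_continuous_on)
  show "(real CARD('n) * real CARD('n))-lipschitz_on UNIV (nuclear_norm :: real^'n^'n \<Rightarrow> real)"
  proof (rule lipschitz_onI)
    fix A B :: "real^'n^'n"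
    have diff_le: "nuclear_norm A - nuclear_norm B \<le> (\<Sum>i\<in>UNIV. \<Sum>k\<in>UNIV. \<bar>(A - B) $ k $ i\<bar>)"
      for A B :: "real^'n^'n"
      using nuclear_norm_triangle[of B "A - B"] nuclear_norm_le_sum_abs[of "A - B"] by simp
    have "(\<Sum>i\<in>UNIV. \<Sum>k\<in>UNIV. \<bar>(B - A) $ k $ i\<bar>)
        = (\<Sum>i\<in>UNIV. \<Sum>k\<in>UNIV. \<bar>(A - B) $ k $ i\<bar>)"
      by (simp add: abs_minus_commute)
    then have "\<bar>nuclear_norm A - nuclear_norm B\<bar> \<le> (\<Sum>i\<in>UNIV. \<Sum>k\<in>UNIV. \<bar>(A - B) $ k $ i\<bar>)"
      using diff_le[of A B] diff_le[of B A] by linarith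
    also have "\<dots> \<le> (\<Sum>i\<in>(UNIV::'n set). \<Sum>k\<in>(UNIV::'n set). norm (A - B))"
      by (intro sum_mono abs_matrix_nth_le_norm)
    also have "\<dots> = real CARD('n) * real CARD('n) * dist A B" by (simp add: dist_norm)
    finally show "dist (nuclear_norm A) (nuclear_norm B) \<le> real CARD('n) * real CARD('n) * dist A B"
      by (simp add: dist_real_def)
  qed simp
qed

lemma nuclear_norm_mult_diag_mat_le:
  assumes svd: "is_svd G U s V"
  shows "nuclear_norm (G ** diag_mat d) \<le>
    ((\<Sum>i\<in>UNIV. s $ i) + (\<Sum>j\<in>UNIV. \<Sum>i\<in>UNIV. s $ i * (V $ j $ i)\<^sup>2 * (d $ j)\<^sup>2)) / 2"
proof -
  have U: "orthogonal_matrix U" and V: "orthogonal_matrix V" and s: "\<forall>i. 0 \<le> s $ i"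
    and G: "G = U ** diag_mat s ** transpose V"
    using svd by (simp_all add: is_svd_def)
  obtain W where W: "orthogonal_matrix W" "nuclear_norm (G ** diag_mat d) = trace (W ** (G ** diag_mat d))"
    by (rule nuclear_norm_attained)
  define Q where "Q = W ** U"
  have Q: "orthogonal_matrix Q" unfolding Q_def using W(1) U by (rule orthogonal_matrix_mul)
  have "W ** (G ** diag_mat d) = (Q ** diag_mat s ** transpose V) ** diag_mat d"
    by (simp add: G Q_def matrix_mul_assoc)
  then have "trace (W ** (G ** diag_mat d)) = (\<Sum>j\<in>UNIV. \<Sum>i\<in>UNIV. s $ i * (Q $ j $ i * (V $ j $ i * d $ j)))"
    by (simp add: trace_mult_diag_mat matrix_mult_diag_mat_mult_transpose_nth sum_distrib_left
        algebra_simps)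
  also have "\<dots> \<le> (\<Sum>j\<in>UNIV. \<Sum>i\<in>UNIV. s $ i * (((Q $ j $ i)\<^sup>2 + (V $ j $ i * d $ j)\<^sup>2) / 2))"
  proof (intro sum_mono mult_left_mono)
    fix j i
    show "Q $ j $ i * (V $ j $ i * d $ j) \<le> ((Q $ j $ i)\<^sup>2 + (V $ j $ i * d $ j)\<^sup>2) / 2"
      using sum_squares_bound[of "Q $ j $ i" "V $ j $ i * d $ j"] by simp
    show "0 \<le> s $ i" using s by simp
  qed
  also have "\<dots> = ((\<Sum>j\<in>UNIV. \<Sum>i\<in>UNIV. s $ i * (Q $ j $ i)\<^sup>2)
        + (\<Sum>j\<in>UNIV. \<Sum>i\<in>UNIV. s $ i * (V $ j $ i)\<^sup>2 * (d $ j)\<^sup>2)) / 2"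
    by (simp add: sum.distrib sum_divide_distrib[symmetric] algebra_simps)
  also have "(\<Sum>j\<in>UNIV. \<Sum>i\<in>UNIV. s $ i * (Q $ j $ i)\<^sup>2)
      = (\<Sum>i\<in>UNIV. s $ i * (\<Sum>j\<in>UNIV. (Q $ j $ i)\<^sup>2))"
    by (subst sum.swap) (simp add: sum_distrib_left)
  also have "(\<Sum>i\<in>UNIV. s $ i * (\<Sum>j\<in>UNIV. (Q $ j $ i)\<^sup>2)) = (\<Sum>i\<in>UNIV. s $ i)"
    by (simp add: orthogonal_matrix_column_sum_squares[OF Q])
  finally show ?thesis using W(2) by simp
qed

text \<open>If every column position j is hit exactly once by the shifts r k j, the squared
  entries of d in the bound above are replaced by their mean.\<close>

lemma sum_nuclear_norm_mult_diag_mat_le: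
  fixes G :: "real^'n^'n" and d :: "real^'n" and r :: "'k \<Rightarrow> 'n \<Rightarrow> 'n"
  assumes "finite K" and r: "\<And>j. bij_betw (\<lambda>k. r k j) K UNIV"
    and d: "(\<Sum>j\<in>UNIV. (d $ j)\<^sup>2) = real (card K)"
  shows "(\<Sum>k\<in>K. nuclear_norm (G ** diag_mat (\<chi> j. d $ r k j))) \<le> real (card K) * nuclear_norm G"
proof -
  obtain U s V where svd: "is_svd G U s V" by (rule singular_value_decomposition)
  then have V: "orthogonal_matrix V" by (simp add: is_svd_def)
  have weights: "(\<Sum>k\<in>K. (d $ r k j)\<^sup>2) = real (card K)" for j
    using sum.reindex_bij_betw[OF r[of j], of "\<lambda>m. (d $ m)\<^sup>2"] d by simp
  have "(\<Sum>k\<in>K. nuclear_norm (G ** diag_mat (\<chi> j. d $ r k j))) \<le>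
      (\<Sum>k\<in>K. ((\<Sum>i\<in>UNIV. s $ i)
        + (\<Sum>j\<in>UNIV. \<Sum>i\<in>UNIV. s $ i * (V $ j $ i)\<^sup>2 * (d $ r k j)\<^sup>2)) / 2)"
    by (intro sum_mono order.trans[OF nuclear_norm_mult_diag_mat_le[OF svd]]) simp
  also have "\<dots> = (real (card K) * (\<Sum>i\<in>UNIV. s $ i)
      + (\<Sum>j\<in>UNIV. \<Sum>i\<in>UNIV. s $ i * (V $ j $ i)\<^sup>2 * (\<Sum>k\<in>K. (d $ r k j)\<^sup>2))) / 2"
  proof -
    have "(\<Sum>k\<in>K. \<Sum>j\<in>UNIV. \<Sum>i\<in>UNIV. s $ i * (V $ j $ i)\<^sup>2 * (d $ r k j)\<^sup>2)
        = (\<Sum>j\<in>UNIV. \<Sum>i\<in>UNIV. \<Sum>k\<in>K. s $ i * (V $ j $ i)\<^sup>2 * (d $ r k j)\<^sup>2)"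
      by (subst sum.swap) (rule sum.cong[OF refl sum.swap])
    then show ?thesis by (simp add: sum_divide_distrib[symmetric] sum.distrib sum_distrib_left)
  qed
  also have "\<dots> = (real (card K) * (\<Sum>i\<in>UNIV. s $ i)
      + real (card K) * (\<Sum>i\<in>UNIV. s $ i * (\<Sum>j\<in>UNIV. (V $ j $ i)\<^sup>2))) / 2"
    by (subst sum.swap) (simp add: weights sum_distrib_left sum_distrib_right algebra_simps)
  also have "\<dots> = real (card K) * nuclear_norm G"
    by (simp add: orthogonal_matrix_column_sum_squares[OF V] nuclear_norm_is_svd[OF svd])
  finally show ?thesis .
qed

section \<open>Column permutations\<close>

lemma lborel_distr_Basis_permutation:
  fixes f :: "'a::euclidean_space \<Rightarrow> 'a"
  assumes p: "bij_betw p Basis Basis" and f: "\<And>x b. b \<in> Basis \<Longrightarrow> f x \<bullet> b = x \<bullet> p b"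
  shows "distr lborel borel f = lborel"
proof (rule lborel_eqI[symmetric])
  have "f = (\<lambda>x. \<Sum>b\<in>Basis. (x \<bullet> p b) *\<^sub>R b)"
    by (rule ext) (simp add: euclidean_representation_sum' f)
  moreover have "continuous_on UNIV (\<lambda>x. \<Sum>b\<in>Basis. (x \<bullet> p b) *\<^sub>R b)"
    by (intro continuous_intros)
  ultimately have f_meas: "f \<in> borel_measurable borel"
    by (simp add: borel_measurable_continuous_onI)
  have p_inj: "p b' = p b \<longleftrightarrow> b' = b" if "b \<in> Basis" "b' \<in> Basis" for b b'
    using p that by (auto simp: bij_betw_def inj_on_def)
  have ball_p: "(\<forall>c\<in>Basis. P c) \<longleftrightarrow> (\<forall>b\<in>Basis. P (p b))" for P
  proof -
    have "p ` Basis = Basis" using p by (simp add: bij_betw_def)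
    then have "(\<forall>c\<in>Basis. P c) \<longleftrightarrow> (\<forall>c\<in>p ` Basis. P c)" by simp
    also have "\<dots> \<longleftrightarrow> (\<forall>b\<in>Basis. P (p b))" by simp
    finally show ?thesis .
  qed
  define pull where "pull a = (\<Sum>b\<in>Basis. (a \<bullet> b) *\<^sub>R p b)" for a :: 'a
  have pull_p: "pull a \<bullet> p b = a \<bullet> b" if "b \<in> Basis" for a b
  proof -
    have "pull a \<bullet> p b = (\<Sum>b'\<in>Basis. (a \<bullet> b') * (if b' = b then 1 else 0))"
      unfolding pull_def inner_sum_left
      using that bij_betwE[OF p] by (intro sum.cong refl) (simp add: inner_Basis p_inj)
    then show ?thesis using that by (simp add: if_distrib cong: if_cong)
  qed
  fix l u :: 'a
  assume le: "\<And>b. b \<in> Basis \<Longrightarrow> l \<bullet> b \<le> u \<bullet> b"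
  have "f -` box l u = box (pull l) (pull u)"
    by (auto simp: mem_box f ball_p[of "\<lambda>c. pull l \<bullet> c < _ \<bullet> c \<and> _ \<bullet> c < pull u \<bullet> c"] pull_p)
  moreover have "\<forall>c\<in>Basis. pull l \<bullet> c \<le> pull u \<bullet> c"
    using le by (simp add: ball_p pull_p)
  ultimately have "emeasure (distr lborel borel f) (box l u) = (\<Prod>c\<in>Basis. (pull u - pull l) \<bullet> c)"
    using f_meas by (simp add: emeasure_distr emeasure_lborel_box_eq)
  also have "\<dots> = (\<Prod>b\<in>Basis. (pull u - pull l) \<bullet> p b)"
    using prod.reindex_bij_betw[OF p, of "\<lambda>c. (pull u - pull l) \<bullet> c"] by simp
  also have "\<dots> = (\<Prod>b\<in>Basis. (u - l) \<bullet> b)"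
    by (simp add: inner_diff_left pull_p cong: prod.cong)
  finally show "emeasure (distr lborel borel f) (box l u) = (\<Prod>b\<in>Basis. (u - l) \<bullet> b)" .
qed simp

definition permute_cols :: "('n \<Rightarrow> 'n) \<Rightarrow> real^'n^'m \<Rightarrow> real^'n^'m" where
  "permute_cols q G = (\<chi> i j. G $ i $ (q j))"

lemma permute_cols_nth [simp]: "permute_cols q G $ i $ j = G $ i $ q j"
  by (simp add: permute_cols_def)

lemma permute_cols_inv:
  assumes "bij q"
  shows "permute_cols q (permute_cols (inv q) G) = G"
  using assms by (simp add: vec_eq_iff bij_is_inj inv_f_f)

lemma Basis_matrix: "(Basis :: (real^'n^'m) set) = (\<lambda>(i, j). axis i (axis j 1)) ` UNIV"
  by (auto simp: Basis_vec_def)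

lemma prod_Basis_matrix:
  fixes f :: "real^'n^'m \<Rightarrow> 'a::comm_monoid_mult"
  shows "(\<Prod>b\<in>Basis. f b) = (\<Prod>i\<in>UNIV. \<Prod>j\<in>UNIV. f (axis i (axis j 1)))"
proof -
  have "inj (\<lambda>(i, j). (axis i (axis j (1::real)) :: real^'n^'m))"
    by (auto simp: inj_def axis_eq_axis)
  then have "(\<Prod>b\<in>Basis. f b) = (\<Prod>(i, j)\<in>UNIV \<times> UNIV. f (axis i (axis j 1)))"
    unfolding Basis_matrix by (subst prod.reindex) (simp_all add: comp_def case_prod_beta)
  also have "\<dots> = (\<Prod>i\<in>UNIV. \<Prod>j\<in>UNIV. f (axis i (axis j 1)))"
    by (rule prod.cartesian_product[symmetric])
  finally show ?thesis .
qed

lemma permute_cols_axis: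
  assumes "bij q"
  shows "permute_cols q (axis i (axis j 1)) = axis i (axis (inv q j) 1)"
  using assms by (auto simp: vec_eq_iff axis_def bij_inv_eq_iff)

lemma lborel_distr_permute_cols:
  assumes q: "bij q"
  shows "distr lborel borel (permute_cols q) = (lborel :: (real^'n^'m) measure)"
proof (rule lborel_distr_Basis_permutation)
  have qi: "bij (inv q)" using q by (rule bij_imp_bij_inv)
  show "bij_betw (permute_cols (inv q)) Basis (Basis :: (real^'n^'m) set)"
  proof (rule bij_betw_byWitness[where f' = "permute_cols q"])
    show "\<forall>a\<in>Basis. permute_cols q (permute_cols (inv q) a) = a"
      using q by (simp add: permute_cols_inv)
    show "\<forall>a\<in>Basis. permute_cols (inv q) (permute_cols q a) = (a :: real^'n^'m)"
      by (simp add: permute_cols_inv[OF qi, unfolded inv_inv_eq[OF q]])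
    show "permute_cols (inv q) ` Basis \<subseteq> (Basis :: (real^'n^'m) set)"
      "permute_cols q ` Basis \<subseteq> (Basis :: (real^'n^'m) set)"
      using q qi by (fastforce simp: Basis_matrix permute_cols_axis)+
  qed
  fix x b :: "real^'n^'m"
  have "permute_cols q x \<bullet> b = (\<Sum>i\<in>UNIV. \<Sum>j\<in>UNIV. x $ i $ q j * b $ i $ j)"
    by (simp add: inner_vec_def)
  also have "\<dots> = (\<Sum>i\<in>UNIV. \<Sum>j\<in>UNIV. x $ i $ j * b $ i $ inv q j)"
  proof (rule sum.cong[OF refl])
    fix i
    show "(\<Sum>j\<in>UNIV. x $ i $ q j * b $ i $ j) = (\<Sum>j\<in>UNIV. x $ i $ j * b $ i $ inv q j)"
      using sum.reindex_bij_betw[OF q, of "\<lambda>j. x $ i $ j * b $ i $ inv q j"]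
      by (simp add: inv_f_f[OF bij_is_inj[OF q]])
  qed
  also have "\<dots> = x \<bullet> permute_cols (inv q) b"
    by (simp add: inner_vec_def)
  finally show "permute_cols q x \<bullet> b = x \<bullet> permute_cols (inv q) b" .
qed

definition perm_matrix :: "('n \<Rightarrow> 'n) \<Rightarrow> real^'n^'n" where
  "perm_matrix q = (\<chi> a b. if a = q b then 1 else 0)"

lemma permute_cols_eq_mult_perm_matrix: "permute_cols q X = X ** perm_matrix q"
proof -
  have "(\<Sum>a\<in>UNIV. X $ i $ a * (if a = q j then 1 else 0)) = X $ i $ q j" for i j
    by (simp add: if_distrib cong: if_cong)
  then show ?thesis by (simp add: perm_matrix_def matrix_matrix_mult_def vec_eq_iff)
qed

lemma orthogonal_matrix_perm_matrix:
  assumes "inj q"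
  shows "orthogonal_matrix (perm_matrix q)"
proof -
  have "column b (perm_matrix q) = axis (q b) 1" for b
    by (simp add: column_def perm_matrix_def axis_def vec_eq_iff)
  then show ?thesis
    unfolding orthogonal_matrix_orthonormal_columns
    using assms by (auto simp: orthogonal_def inner_axis_axis inj_def)
qed

lemma nuclear_norm_permute_cols:
  assumes "inj q"
  shows "nuclear_norm (permute_cols q A) = nuclear_norm A"
  by (simp add: permute_cols_eq_mult_perm_matrix nuclear_norm_mult_orthogonal
      orthogonal_matrix_perm_matrix[OF assms])

lemma permute_cols_mult_diag_mat:
  assumes "bij q"
  shows "permute_cols (inv q) G ** diag_mat d = permute_cols (inv q) (G ** diag_mat (\<chi> m. d $ q m))"
  using assms by (simp add: vec_eq_iff matrix_mult_diag_mat_nth bij_is_surj surj_f_inv_f)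

lemma latin_square_exists:
  "\<exists>q :: 'n::finite \<Rightarrow> 'n \<Rightarrow> 'n. (\<forall>k. bij (q k)) \<and> (\<forall>j. bij (\<lambda>k. q k j))"
proof -
  define n where "n = CARD('n)"
  obtain e :: "'n \<Rightarrow> nat" where e: "bij_betw e UNIV {..<n}"
    using finite_same_card_bij[of "UNIV :: 'n set" "{..<n}"] unfolding n_def by auto
  define q where "q k j = inv_into UNIV e ((e j + e k) mod n)" for k j
  have "n > 0" unfolding n_def by simp
  have "inj (q k)" for k
  proof
    fix j j' assume "q k j = q k j'"
    then have "(e j + e k) mod n = (e j' + e k) mod n"
      using inj_on_inv_into[of "{..<n}" e UNIV] e \<open>n > 0\<close>
      unfolding q_def bij_betw_def inj_on_def by auto
    moreover have "e j < n" "e j' < n" using e by (auto simp: bij_betw_def)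
    ultimately have "e j = e j'"
      by (metis cong_def cong_add_rcancel_nat cong_less_modulus_unique_nat)
    then show "j = j'" using e by (auto simp: bij_betw_def inj_def)
  qed
  then have "bij (q k)" for k by (simp add: bij_def finite_UNIV_inj_surj)
  moreover have "(\<lambda>k. q k j) = q j" for j by (simp add: q_def fun_eq_iff add.commute)
  ultimately show ?thesis by metis
qed

section \<open>The Gaussian ensemble\<close>

lemma borel_measurable_nuclear_norm_mult [measurable]:
  "(\<lambda>G. nuclear_norm (G ** D)) \<in> borel_measurable (borel :: (real^'n^'n) measure)"
proof -
  have "continuous_on UNIV (\<lambda>G :: real^'n^'n. G ** D)"
    unfolding matrix_matrix_mult_def
    by (intro continuous_on_vec_lambda continuous_intros continuous_on_component)
  then have "continuous_on UNIV (\<lambda>G :: real^'n^'n. nuclear_norm (G ** D))"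
    by (rule continuous_on_compose2[OF continuous_on_nuclear_norm]) auto
  then show ?thesis by (rule borel_measurable_continuous_onI)
qed

lemma borel_measurable_permute_cols [measurable]:
  "permute_cols q \<in> borel_measurable (borel :: (real^'n^'m) measure)"
  unfolding permute_cols_def
  by (intro borel_measurable_continuous_onI continuous_on_vec_lambda continuous_on_component
      continuous_on_id)

lemma borel_measurable_matrix_nth [measurable]:
  "(\<lambda>G :: real^'n^'m. G $ i $ j) \<in> borel_measurable borel"
  by (intro borel_measurable_continuous_onI continuous_on_component continuous_on_id)

definition gauss_density :: "real^'n^'n \<Rightarrow> real" where
  "gauss_density G = (\<Prod>i\<in>UNIV. \<Prod>j\<in>UNIV. normal_density 0 (1 / sqrt (real CARD('n))) (G $ i $ j))"

lemma gauss_mat_eq_density: "gauss_mat = density lborel (\<lambda>G. ennreal (gauss_density G))"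
  unfolding gauss_mat_def gauss_density_def ..

lemma borel_measurable_gauss_density [measurable]: "gauss_density \<in> borel_measurable borel"
  unfolding gauss_density_def by measurable

lemma gauss_density_nonneg: "0 \<le> gauss_density G"
  unfolding gauss_density_def by (intro prod_nonneg) simp

lemma gauss_density_permute_cols:
  fixes G :: "real^'n^'n"
  assumes "bij q"
  shows "gauss_density (permute_cols q G) = gauss_density G"
proof -
  let ?g = "normal_density 0 (1 / sqrt (real CARD('n)))"
  have "(\<Prod>j\<in>UNIV. ?g (G $ i $ q j)) = (\<Prod>j\<in>UNIV. ?g (G $ i $ j))" for i
    using prod.reindex_bij_betw[OF assms, of "\<lambda>j. ?g (G $ i $ j)"] by simp
  then show ?thesis by (simp add: gauss_density_def)
qed

lemma integral_gauss_mat_permute_cols: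
  fixes f :: "real^'n^'n \<Rightarrow> real"
  assumes q: "bij q" and f [measurable]: "f \<in> borel_measurable borel"
  shows "(\<integral>G. f (permute_cols q G) \<partial>gauss_mat) = (\<integral>G. f G \<partial>gauss_mat)"
proof -
  have "(\<integral>G. f (permute_cols q G) \<partial>gauss_mat)
      = (\<integral>G. gauss_density (permute_cols q G) * f (permute_cols q G) \<partial>lborel)"
    unfolding gauss_mat_eq_density
    by (subst integral_density) (auto simp: gauss_density_nonneg gauss_density_permute_cols[OF q])
  also have "\<dots> = (\<integral>H. gauss_density H * f H \<partial>(distr lborel borel (permute_cols q)))"
    by (subst integral_distr) auto
  also have "\<dots> = (\<integral>G. f G \<partial>gauss_mat)"
    unfolding gauss_mat_eq_density lborel_distr_permute_cols[OF q]
    by (subst integral_density) (auto simp: gauss_density_nonneg)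
  finally show ?thesis .
qed

text \<open>An integrable majorant of every entry: its product with the Gaussian density
  factorises over the entries.\<close>

definition entry_product_bound :: "real^'n^'m \<Rightarrow> real" where
  "entry_product_bound G = (\<Prod>i\<in>UNIV. \<Prod>j\<in>UNIV. 1 + \<bar>G $ i $ j\<bar>)"

lemma borel_measurable_entry_product_bound [measurable]:
  "entry_product_bound \<in> borel_measurable (borel :: (real^'n^'m) measure)"
  unfolding entry_product_bound_def by measurable

lemma member_le_prod_ge_1:
  fixes f :: "'a \<Rightarrow> real"
  assumes "finite A" "a \<in> A" "\<And>x. x \<in> A \<Longrightarrow> 1 \<le> f x"
  shows "f a \<le> prod f A"
proof -
  have "prod f A = f a * prod f (A - {a})" using assms(1,2) by (rule prod.remove)
  moreover have "1 \<le> prod f (A - {a})" using assms(3) by (intro prod_ge_1) auto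
  moreover have "0 \<le> f a" using assms(2,3) by (meson order.trans zero_le_one)
  ultimately show ?thesis by (metis mult_left_mono mult.right_neutral)
qed

lemma abs_nth_le_entry_product_bound: "\<bar>G $ i $ j\<bar> \<le> entry_product_bound G"
proof -
  have "1 + \<bar>G $ i $ j\<bar> \<le> (\<Prod>j\<in>UNIV. 1 + \<bar>G $ i $ j\<bar>)"
    by (rule member_le_prod_ge_1) auto
  also have "\<dots> \<le> entry_product_bound G" unfolding entry_product_bound_def
    by (rule member_le_prod_ge_1) (auto intro: prod_ge_1)
  finally show ?thesis by simp
qed

lemma integrable_entry_product_bound:
  "integrable (gauss_mat :: (real^'n^'n) measure) entry_product_bound"
proof -
  let ?s = "1 / sqrt (real CARD('n))"
  define h where "h x = normal_density 0 ?s x * (1 + \<bar>x\<bar>)" for x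
  have h_int: "integrable lborel h"
  proof -
    have "integrable lborel (\<lambda>x. normal_density 0 ?s x + normal_density 0 ?s x * \<bar>x - 0\<bar> ^ 1)"
      using integrable_normal_moment_abs[of ?s 0 1]
      by (intro Bochner_Integration.integrable_add integrable_normal_density) auto
    then show ?thesis unfolding h_def by (simp add: algebra_simps)
  qed
  have h_nonneg: "0 \<le> h x" for x unfolding h_def by simp
  then have "0 \<le> (\<integral>x. h x \<partial>lborel)" by (simp add: integral_nonneg_AE)
  have [measurable]: "h \<in> borel_measurable borel" unfolding h_def by measurable
  have "gauss_density G * entry_product_bound G = (\<Prod>b\<in>Basis. h (G \<bullet> b))" for G :: "real^'n^'n"
    unfolding gauss_density_def entry_product_bound_def h_def
    by (simp add: prod_Basis_matrix prod.distrib inner_axis)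
  then have "ennreal (gauss_density G * entry_product_bound G) = (\<Prod>b\<in>Basis. ennreal (h (G \<bullet> b)))"
    for G :: "real^'n^'n"
    by (simp add: prod_ennreal h_nonneg)
  then have "(\<integral>\<^sup>+G. ennreal (gauss_density G * entry_product_bound G) \<partial>(lborel :: (real^'n^'n) measure))
      = (\<integral>\<^sup>+G. (\<Prod>b\<in>Basis. ennreal (h (G \<bullet> b))) \<partial>(lborel :: (real^'n^'n) measure))"
    by simp
  also have "\<dots> = (\<Prod>b\<in>(Basis :: (real^'n^'n) set). \<integral>\<^sup>+x. ennreal (h x) \<partial>lborel)"
    by (rule nn_integral_lborel_prod) auto
  also have "\<dots> = ennreal (\<Prod>b\<in>(Basis :: (real^'n^'n) set). \<integral>x. h x \<partial>lborel)"
    by (simp add: nn_integral_eq_integral[OF h_int] h_nonneg ennreal_power \<open>0 \<le> (\<integral>x. h x \<partial>lborel)\<close>)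
  finally have "(\<integral>\<^sup>+G. ennreal (gauss_density G * entry_product_bound G)
      \<partial>(lborel :: (real^'n^'n) measure)) < \<infinity>"
    by simp
  then have "integrable lborel (\<lambda>G :: real^'n^'n. gauss_density G * entry_product_bound G)"
    by (rule integrableI_nonneg[rotated 2])
      (auto simp: gauss_density_nonneg entry_product_bound_def intro!: mult_nonneg_nonneg prod_nonneg)
  then show ?thesis
    unfolding gauss_mat_eq_density by (subst integrable_density) (auto simp: gauss_density_nonneg)
qed

lemma integrable_nuclear_norm_mult_diag_mat:
  "integrable (gauss_mat :: (real^'n^'n) measure) (\<lambda>G. nuclear_norm (G ** diag_mat d))"
proof (rule Bochner_Integration.integrable_bound)
  let ?c = "real CARD('n) * (\<Sum>i\<in>UNIV. \<bar>d $ i\<bar>)"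
  show "integrable (gauss_mat :: (real^'n^'n) measure) (\<lambda>G. ?c * entry_product_bound G)"
    by (intro integrable_mult_right integrable_entry_product_bound)
  show "(\<lambda>G. nuclear_norm (G ** diag_mat d)) \<in> borel_measurable (gauss_mat :: (real^'n^'n) measure)"
    unfolding gauss_mat_eq_density by simp
  show "AE G in gauss_mat. norm (nuclear_norm (G ** diag_mat d)) \<le> norm (?c * entry_product_bound G)"
  proof (rule AE_I2)
    fix G :: "real^'n^'n"
    have "nuclear_norm (G ** diag_mat d) \<le> (\<Sum>i\<in>UNIV. \<Sum>k\<in>UNIV. \<bar>(G ** diag_mat d) $ k $ i\<bar>)"
      by (rule nuclear_norm_le_sum_abs)
    also have "\<dots> \<le> (\<Sum>i\<in>UNIV. \<Sum>k\<in>(UNIV::'n set). entry_product_bound G * \<bar>d $ i\<bar>)"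
      by (intro sum_mono)
        (simp add: matrix_mult_diag_mat_nth abs_mult mult_right_mono abs_nth_le_entry_product_bound)
    also have "\<dots> = ?c * entry_product_bound G"
      by (simp add: sum_distrib_left sum_distrib_right algebra_simps)
    finally show "norm (nuclear_norm (G ** diag_mat d)) \<le> norm (?c * entry_product_bound G)"
      using nuclear_norm_nonneg[of "G ** diag_mat d"] by simp
  qed
qed

text \<open>Averaging over the column shifts of d given by a Latin square: each shift has the
  same expectation, as the Gaussian law is invariant under column permutations.\<close>

theorem integral_nuclear_norm_mult_diag_mat_le:
  fixes d :: "real^'n"
  assumes d: "(\<Sum>j\<in>UNIV. (d $ j)\<^sup>2) = real CARD('n)"
  shows "(\<integral>G. nuclear_norm (G ** diag_mat d) \<partial>gauss_mat)
    \<le> (\<integral>G. nuclear_norm G \<partial>(gauss_mat :: (real^'n^'n) measure))"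
proof -
  obtain q :: "'n \<Rightarrow> 'n \<Rightarrow> 'n" where q: "\<And>k. bij (q k)" "\<And>j. bij (\<lambda>k. q k j)"
    using latin_square_exists by blast
  define dk where "dk k = (\<chi> m. d $ q k m)" for k
  have shift: "(\<integral>G. nuclear_norm (G ** diag_mat d) \<partial>gauss_mat)
      = (\<integral>G. nuclear_norm (G ** diag_mat (dk k)) \<partial>(gauss_mat :: (real^'n^'n) measure))" for k
  proof -
    have "(\<integral>G. nuclear_norm (G ** diag_mat d) \<partial>(gauss_mat :: (real^'n^'n) measure))
        = (\<integral>G. nuclear_norm (permute_cols (inv (q k)) G ** diag_mat d) \<partial>gauss_mat)"
      by (rule integral_gauss_mat_permute_cols[OF bij_imp_bij_inv[OF q(1)], symmetric]) simp
    also have "\<dots> = (\<integral>G. nuclear_norm (G ** diag_mat (dk k)) \<partial>gauss_mat)"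
      by (simp add: permute_cols_mult_diag_mat[OF q(1)] nuclear_norm_permute_cols
          bij_is_inj[OF bij_imp_bij_inv[OF q(1)]] dk_def)
    finally show ?thesis .
  qed
  have mult_diag_one: "G ** diag_mat (\<chi> i. 1) = G" for G :: "real^'n^'n"
    by (simp add: vec_eq_iff matrix_mult_diag_mat_nth)
  have "real CARD('n) * (\<integral>G. nuclear_norm (G ** diag_mat d) \<partial>gauss_mat)
      = (\<integral>G. (\<Sum>k\<in>UNIV. nuclear_norm (G ** diag_mat (dk k))) \<partial>(gauss_mat :: (real^'n^'n) measure))"
    by (simp add: shift[symmetric] integrable_nuclear_norm_mult_diag_mat)
  also have "\<dots> \<le> (\<integral>G. real CARD('n) * nuclear_norm G \<partial>(gauss_mat :: (real^'n^'n) measure))"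
  proof (rule Bochner_Integration.integral_mono)
    show "integrable gauss_mat (\<lambda>G :: real^'n^'n. \<Sum>k\<in>UNIV. nuclear_norm (G ** diag_mat (dk k)))"
      by (intro Bochner_Integration.integrable_sum integrable_nuclear_norm_mult_diag_mat)
    show "integrable gauss_mat (\<lambda>G :: real^'n^'n. real CARD('n) * nuclear_norm G)"
      using integrable_nuclear_norm_mult_diag_mat[of "\<chi> i. 1 :: real^'n"] by (simp add: mult_diag_one)
    show "(\<Sum>k\<in>UNIV. nuclear_norm (G ** diag_mat (dk k))) \<le> real CARD('n) * nuclear_norm G" for G
      using sum_nuclear_norm_mult_diag_mat_le[of UNIV "\<lambda>k j. q k j" d G] q(2) d
      by (simp add: dk_def)
  qed
  finally show ?thesis by simp
qed

theorem theorem6: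
  "alpha_R_star TYPE('n::finite) = alpha_R TYPE('n)"
proof -
  let ?F = "\<lambda>D :: real^'n^'n. (\<integral>G. (1 / real CARD('n)) * (\<Sum>k=1..CARD('n). sigma (G ** D) k) \<partial>gauss_mat)"
  have F: "?F D = (\<integral>G. nuclear_norm (G ** D) \<partial>gauss_mat) / real CARD('n)" for D
    by (simp add: nuclear_norm_def)
  have "((mat 1 :: real^'n^'n) $ i $ j)\<^sup>2 = (if i = j then 1 else 0)" for i j
    by (simp add: mat_def)
  then have "admissible_D (mat 1 :: real^'n^'n)"
    by (simp add: admissible_D_def mat_def)
  moreover have "?F D \<le> ?F (mat 1)" if "admissible_D D" for D
  proof -
    define d where "d = (\<chi> i. D $ i $ i)"
    have D: "D = diag_mat d"
      using that unfolding admissible_D_def d_def diag_mat_def by (auto simp: vec_eq_iff)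
    have "(diag_mat d $ i $ j)\<^sup>2 = (if i = j then (d $ i)\<^sup>2 else 0)" for i j
      by (simp add: diag_mat_def)
    then have "(\<Sum>i\<in>UNIV. (d $ i)\<^sup>2) = real CARD('n)"
      using that unfolding admissible_D_def D by simp
    then show ?thesis
      unfolding F D by (simp add: divide_right_mono integral_nuclear_norm_mult_diag_mat_le)
  qed
  ultimately have "(GREATEST v. \<exists>D. admissible_D D \<and> v = ?F D) = ?F (mat 1)"
    by (intro Greatest_equality) auto
  then show ?thesis by (simp add: alpha_R_star_def alpha_R_def)
qed

end
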